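(* Let $q$ be a positive multiple of $24$, $w_A,w_B:\mathbb{Z}/q\mathbb{Z}\to[0,1]$, and $a,b:\mathbb{Z}/24\mathbb{Z}\to[0,1]$ given by $a(k):=\frac{24}{q}\sum_{x\equiv k\ (\mathrm{mod}\ 24)}w_A(x)$, $b(k):=\frac{24}{q}\sum_{x\equiv k\ (\mathrm{mod}\ 24)}w_B(x)$. Then $$\frac{24}{q}\sum_{t\in\mathbb{Z}/q\mathbb{Z}}(w_A*w_B)(t)f_q(t)\ \ge\ \sum_{t\in\mathbb{Z}/24\mathbb{Z}}(a*b)(t)f_{24}(t)-\frac1{\sqrt5}\sqrt{\sum_{k}\big(a(k)-a(k)^2\big)}\sqrt{\sum_{k}\big(b(k)-b(k)^2\big)}.$$
   Context: For $f,g:\mathbb{Z}/n\mathbb{Z}\to\mathbb{C}$: convolution $(f*g)(x):=\frac1n\sum_{y\in\mathbb{Z}/n\mathbb{Z}}f(y)g(x-y)$, and $f_n(t):=\#\{x\in\mathbb{Z}/n\mathbb{Z}:x^2=t\}$. Sums over $k$ range over $\mathbb{Z}/24\mathbb{Z}$. *)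

theory Defs
  imports "HOL-Analysis.Analysis"
begin

text \<open>Z/nZ is represented by the residues {0..<n} of type nat; functions
  Z/nZ -> C (here real suffices) are functions nat => real, only their values
  on {0..<n} matter.\<close>

definition zconv :: "nat \<Rightarrow> (nat \<Rightarrow> real) \<Rightarrow> (nat \<Rightarrow> real) \<Rightarrow> nat \<Rightarrow> real" where
  "zconv n f g x = (1 / real n) * (\<Sum>y<n. f y * g ((x + n - y) mod n))"

definition sqcount :: "nat \<Rightarrow> nat \<Rightarrow> nat" where
  "sqcount n t = card {x \<in> {..<n}. (x * x) mod n = t mod n}"

definition class_avg :: "nat \<Rightarrow> (nat \<Rightarrow> real) \<Rightarrow> nat \<Rightarrow> real" where
  "class_avg q w k = (24 / real q) * (\<Sum>x \<in> {x. x < q \<and> x mod 24 = k}. w x)"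

end

theory Submission
  imports Defs "HOL-Library.Real_Mod"
begin

text \<open>
  Expanding the square counts in additive characters, both sides become \<open>24 / q\<^sup>2\<close> times a
  bilinear sum \<open>\<Sum>\<^sub>y \<Sum>\<^sub>z w\<^sub>A(y) w\<^sub>B(z) f\<^sub>n(y + z)\<close> over \<open>y, z < q\<close>, with \<open>n = q\<close> on the left and
  \<open>n = 24\<close> on the right; modulo \<open>n\<close> this sum is \<open>n\<^sup>-\<^sup>1 \<Sum>\<^sub>\<xi> \<hat>w\<^sub>A(\<xi>) \<hat>w\<^sub>B(\<xi>) G\<^sub>n(\<xi>)\<close> with the quadratic
  Gauss sum \<open>G\<^sub>n\<close>. Modulo \<open>q\<close>, the frequencies that are multiples of \<open>q/24\<close> reproduce the sum
  modulo 24 exactly. For every other \<open>\<xi>\<close> the order \<open>r\<close> of \<open>2\<xi>\<close> in \<open>\<int>/q\<int>\<close> does not divide 12, so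
  \<open>r \<ge> 5\<close> and \<open>|G\<^sub>q(\<xi>)|\<^sup>2 \<le> q\<^sup>2/r \<le> q\<^sup>2/5\<close>. Cauchy--Schwarz then bounds the remaining sum by the
  Fourier mass of \<open>w\<^sub>A\<close> and \<open>w\<^sub>B\<close> off those multiples, which by Parseval and \<open>w\<^sup>2 \<le> w\<close> is at most
  \<open>q \<Sum> w\<^sup>2 - (q\<^sup>2/24) \<Sum>\<^sub>k a(k)\<^sup>2 \<le> (q\<^sup>2/24) \<Sum>\<^sub>k (a(k) - a(k)\<^sup>2)\<close>.
\<close>

definition add_char :: "nat \<Rightarrow> int \<Rightarrow> complex" where
  "add_char n k = cis (2 * pi * of_int k / of_nat n)"

definition dft :: "nat \<Rightarrow> nat set \<Rightarrow> (nat \<Rightarrow> real) \<Rightarrow> nat \<Rightarrow> complex" where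
  "dft n Y u \<xi> = (\<Sum>y\<in>Y. of_real (u y) * add_char n (int \<xi> * int y))"

definition gauss_sum :: "nat \<Rightarrow> nat \<Rightarrow> complex" where
  "gauss_sum n \<xi> = (\<Sum>s<n. add_char n (- (int \<xi> * int (s * s))))"

definition sqcount_pair_sum :: "nat \<Rightarrow> nat \<Rightarrow> (nat \<Rightarrow> real) \<Rightarrow> (nat \<Rightarrow> real) \<Rightarrow> real" where
  "sqcount_pair_sum n N u v = (\<Sum>y<N. \<Sum>z<N. u y * v z * real (sqcount n (y + z)))"

text \<open>For \<open>n = m * d\<close> these are the frequencies that are not multiples of \<open>m\<close>.\<close>
definition minor_freqs :: "nat \<Rightarrow> nat \<Rightarrow> nat set" where
  "minor_freqs n d = {\<xi> \<in> {..<n}. \<not> n dvd d * \<xi>}"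

lemma add_char_add: "add_char n (a + b) = add_char n a * add_char n b"
  unfolding add_char_def by (simp add: cis_mult add_divide_distrib distrib_left)

lemma add_char_power: "add_char n k ^ j = add_char n (int j * k)"
  unfolding add_char_def Complex.DeMoivre by (simp add: field_simps)

lemma cnj_add_char: "cnj (add_char n k) = add_char n (- k)"
  unfolding add_char_def by (simp add: cis_cnj)

lemma norm_add_char [simp]: "norm (add_char n k) = 1"
  unfolding add_char_def by simp

lemma add_char_eq_1_iff:
  assumes "n > 0" shows "add_char n k = 1 \<longleftrightarrow> int n dvd k"
proof
  assume "add_char n k = 1"
  then obtain j where "2 * pi * of_int k / of_nat n = of_int j * (2 * pi)"
    unfolding add_char_def cis_eq_1_iff by blast
  then have "of_int k = of_int j * (real n)" using assms by (simp add: field_simps)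
  then have "k = j * int n" by (metis of_int_eq_iff of_int_mult of_int_of_nat_eq)
  then show "int n dvd k" by simp
next
  assume "int n dvd k"
  then obtain j where "k = int n * j" by blast
  then have "2 * pi * of_int k / of_nat n = of_int j * (2 * pi)" using assms by simp
  then show "add_char n k = 1" unfolding add_char_def cis_eq_1_iff by blast
qed

lemma add_char_cong:
  assumes "n > 0" "int n dvd (a - b)" shows "add_char n a = add_char n b"
proof -
  have "add_char n a = add_char n (a - b) * add_char n b" by (simp flip: add_char_add)
  then show ?thesis using assms by (simp add: add_char_eq_1_iff)
qed

lemma sum_add_char:
  assumes "n > 0"
  shows "(\<Sum>x<n. add_char n (int x * k)) = (if int n dvd k then of_nat n else 0)"
proof -
  have "(\<Sum>x<n. add_char n (int x * k)) = (\<Sum>x<n. add_char n k ^ x)"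
    by (simp add: add_char_power)
  also have "\<dots> = (if int n dvd k then of_nat n else 0)"
    unfolding sum_gp_strict using assms by (auto simp: add_char_eq_1_iff add_char_power)
  finally show ?thesis .
qed

lemma add_char_scale:
  assumes "m > 0" shows "add_char (m * d) (int m * k) = add_char d k"
  unfolding add_char_def using assms by (simp add: field_simps)

subsection \<open>Fourier expansion of square counts\<close>

lemma nat_mod_eq_iff_int_dvd: "a mod n = b mod n \<longleftrightarrow> int n dvd (int b - int a)"
  by (metis mod_eq_dvd_iff of_nat_eq_iff of_nat_mod)

lemma sum_swap_outer3:
  "(\<Sum>x\<in>A. \<Sum>y\<in>B. \<Sum>z\<in>C. g x y z) = (\<Sum>y\<in>B. \<Sum>z\<in>C. \<Sum>x\<in>A. g x y z)"
  by (subst sum.swap) (intro sum.cong refl sum.swap)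

lemma sqcount_fourier:
  assumes "n > 0"
  shows "(of_nat (sqcount n t) :: complex)
    = (1 / of_nat n) * (\<Sum>\<xi><n. add_char n (int \<xi> * int t) * gauss_sum n \<xi>)"
proof -
  have "(of_nat (sqcount n t) :: complex) = (\<Sum>s<n. if int n dvd (int t - int (s * s)) then 1 else 0)"
    unfolding sqcount_def by (subst sum.inter_filter [symmetric]) (auto simp: nat_mod_eq_iff_int_dvd)
  also have "\<dots> = (\<Sum>s<n. (1 / of_nat n) * (\<Sum>\<xi><n. add_char n (int \<xi> * (int t - int (s * s)))))"
    using assms by (intro sum.cong) (auto simp: sum_add_char)
  also have "\<dots> = (1 / of_nat n) * (\<Sum>s<n. \<Sum>\<xi><n.
      add_char n (int \<xi> * int t) * add_char n (- (int \<xi> * int (s * s))))"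
    by (simp add: sum_distrib_left right_diff_distrib flip: add_char_add)
  also have "\<dots> = (1 / of_nat n) * (\<Sum>\<xi><n. add_char n (int \<xi> * int t) * gauss_sum n \<xi>)"
    unfolding gauss_sum_def by (subst sum.swap) (simp add: sum_distrib_left)
  finally show ?thesis .
qed

lemma sqcount_pair_sum_fourier:
  assumes "n > 0"
  shows "complex_of_real (sqcount_pair_sum n N u v)
    = (1 / of_nat n) * (\<Sum>\<xi><n. dft n {..<N} u \<xi> * dft n {..<N} v \<xi> * gauss_sum n \<xi>)"
proof -
  let ?U = "\<lambda>\<xi> y. of_real (u y) * add_char n (int \<xi> * int y)"
  let ?V = "\<lambda>\<xi> z. of_real (v z) * add_char n (int \<xi> * int z)"
  have dft_product: "dft n {..<N} u \<xi> * dft n {..<N} v \<xi> * gauss_sum n \<xi>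
      = (\<Sum>y<N. \<Sum>z<N. ?U \<xi> y * ?V \<xi> z * gauss_sum n \<xi>)" for \<xi>
    unfolding dft_def sum_product by (simp only: sum_distrib_right)
  have "complex_of_real (sqcount_pair_sum n N u v)
      = (\<Sum>y<N. \<Sum>z<N. \<Sum>\<xi><n. (1 / of_nat n) * (?U \<xi> y * ?V \<xi> z * gauss_sum n \<xi>))"
    unfolding sqcount_pair_sum_def of_real_sum of_real_mult of_real_of_nat_eq
    using assms by (simp add: sqcount_fourier sum_distrib_left algebra_simps flip: add_char_add)
  also have "\<dots> = (\<Sum>\<xi><n. \<Sum>y<N. \<Sum>z<N. (1 / of_nat n) * (?U \<xi> y * ?V \<xi> z * gauss_sum n \<xi>))"
    by (rule sum_swap_outer3 [symmetric])
  also have "\<dots> = (1 / of_nat n) * (\<Sum>\<xi><n. dft n {..<N} u \<xi> * dft n {..<N} v \<xi> * gauss_sum n \<xi>)"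
    by (simp add: dft_product sum_distrib_left)
  finally show ?thesis .
qed

lemma parseval:
  assumes "n > 0"
  shows "(\<Sum>\<xi><n. (cmod (dft n {..<n} u \<xi>))\<^sup>2) = real n * (\<Sum>y<n. (u y)\<^sup>2)"
proof -
  have "complex_of_real (\<Sum>\<xi><n. (cmod (dft n {..<n} u \<xi>))\<^sup>2)
      = (\<Sum>\<xi><n. dft n {..<n} u \<xi> * cnj (dft n {..<n} u \<xi>))"
    by (simp only: of_real_sum complex_norm_square)
  also have "\<dots> = (\<Sum>\<xi><n. \<Sum>y<n. \<Sum>z<n.
      of_real (u y) * of_real (u z) * add_char n (int \<xi> * (int y - int z)))"
    unfolding dft_def sum_product cnj_sum
    by (simp add: cnj_add_char right_diff_distrib mult_ac flip: add_char_add)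
  also have "\<dots> = (\<Sum>y<n. \<Sum>z<n.
      of_real (u y) * of_real (u z) * (\<Sum>\<xi><n. add_char n (int \<xi> * (int y - int z))))"
    unfolding sum_distrib_left by (rule sum_swap_outer3)
  also have "\<dots> = (\<Sum>y<n. \<Sum>z<n. if z = y then of_real (u y) * of_real (u z) * of_nat n else 0)"
  proof (intro sum.cong refl)
    fix y z assume "y \<in> {..<n}" "z \<in> {..<n}"
    then have "int n dvd (int y - int z) \<longleftrightarrow> z = y"
      by (simp flip: nat_mod_eq_iff_int_dvd)
    with assms show "of_real (u y) * of_real (u z) * (\<Sum>\<xi><n. add_char n (int \<xi> * (int y - int z)))
        = (if z = y then of_real (u y) * of_real (u z) * of_nat n else 0)"
      by (simp add: sum_add_char)
  qed
  also have "\<dots> = complex_of_real (real n * (\<Sum>y<n. (u y)\<^sup>2))"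
    by (simp add: sum_distrib_left power2_eq_square mult_ac)
  finally show ?thesis by (simp only: of_real_eq_iff)
qed

subsection \<open>The Gauss sum bound\<close>

lemma sum_reindex_add_mod:
  fixes g :: "nat \<Rightarrow> 'a::comm_monoid_add"
  assumes "n > 0"
  shows "(\<Sum>s<n. g s) = (\<Sum>h<n. g ((t + h) mod n))"
proof -
  have inj: "inj_on (\<lambda>h. (t + h) mod n) {..<n}"
  proof (rule inj_onI)
    fix x y assume "x \<in> {..<n}" "y \<in> {..<n}" "(t + x) mod n = (t + y) mod n"
    then show "x = y" by (simp add: nat_mod_eq_iff_int_dvd flip: nat_mod_eq_iff_int_dvd [of x])
  qed
  have "(\<lambda>h. (t + h) mod n) ` {..<n} = {..<n}"
    by (rule endo_inj_surj [OF _ _ inj]) (use assms in auto)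
  then show ?thesis
    using sum.reindex [OF inj, of g] by simp
qed

lemma add_char_square_shift:
  assumes "n > 0"
  shows "add_char n (int \<xi> * (int t * int t - int ((t + h) mod n) * int ((t + h) mod n)))
    = add_char n (- (int \<xi> * int h * int h)) * add_char n (int t * (- (2 * int \<xi> * int h)))"
proof -
  have "int n dvd int ((t + h) mod n) * int ((t + h) mod n) - int (t + h) * int (t + h)"
    by (metis mod_mult_cong mod_mod_trivial of_nat_mult nat_mod_eq_iff_int_dvd)
  then have "int n dvd - int \<xi> * (int ((t + h) mod n) * int ((t + h) mod n) - int (t + h) * int (t + h))"
    by (rule dvd_mult)
  also have "- int \<xi> * (int ((t + h) mod n) * int ((t + h) mod n) - int (t + h) * int (t + h))
      = int \<xi> * (int t * int t - int ((t + h) mod n) * int ((t + h) mod n))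
        - (- (int \<xi> * int h * int h) + int t * (- (2 * int \<xi> * int h)))"
    by (simp add: algebra_simps)
  finally show ?thesis
    using assms by (simp add: add_char_cong flip: add_char_add)
qed

lemma gauss_sum_norm_sq:
  assumes "n > 0"
  shows "complex_of_real ((cmod (gauss_sum n \<xi>))\<^sup>2)
    = (\<Sum>h<n. add_char n (- (int \<xi> * int h * int h)) * (if n dvd 2 * \<xi> * h then of_nat n else 0))"
proof -
  have "complex_of_real ((cmod (gauss_sum n \<xi>))\<^sup>2)
      = (\<Sum>t<n. \<Sum>s<n. add_char n (int \<xi> * (int t * int t - int s * int s)))"
    unfolding complex_norm_square gauss_sum_def cnj_sum sum_product
    by (subst sum.swap) (simp add: cnj_add_char right_diff_distrib mult.commute flip: add_char_add)
  also have "\<dots> = (\<Sum>t<n. \<Sum>h<n.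
      add_char n (int \<xi> * (int t * int t - int ((t + h) mod n) * int ((t + h) mod n))))"
    using assms by (intro sum.cong refl sum_reindex_add_mod)
  also have "\<dots> = (\<Sum>t<n. \<Sum>h<n.
      add_char n (- (int \<xi> * int h * int h)) * add_char n (int t * (- (2 * int \<xi> * int h))))"
    using assms by (intro sum.cong refl add_char_square_shift)
  also have "\<dots> = (\<Sum>h<n. add_char n (- (int \<xi> * int h * int h))
      * (\<Sum>t<n. add_char n (int t * (- (2 * int \<xi> * int h)))))"
    by (subst sum.swap) (simp add: sum_distrib_left)
  also have "\<dots> = (\<Sum>h<n. add_char n (- (int \<xi> * int h * int h))
      * (if n dvd 2 * \<xi> * h then of_nat n else 0))"
  proof (intro sum.cong refl)
    fix h
    have "2 * int \<xi> * int h = int (2 * \<xi> * h)" by simp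
    then have "int n dvd - (2 * int \<xi> * int h) \<longleftrightarrow> n dvd 2 * \<xi> * h"
      by (simp only: dvd_minus_iff int_dvd_int_iff)
    then show "add_char n (- (int \<xi> * int h * int h)) * (\<Sum>t<n. add_char n (int t * (- (2 * int \<xi> * int h))))
        = add_char n (- (int \<xi> * int h * int h)) * (if n dvd 2 * \<xi> * h then of_nat n else 0)"
      by (simp only: sum_add_char [OF assms])
  qed
  finally show ?thesis .
qed

lemma card_dvd_mult_le_gcd:
  fixes n c :: nat
  assumes "n > 0"
  shows "card {h \<in> {..<n}. n dvd c * h} \<le> gcd n c"
proof -
  define g where "g = gcd n c"
  define r where "r = n div g"
  have "g > 0" using assms by (simp add: g_def)
  have n_eq: "n = r * g" by (simp add: r_def g_def)
  have "coprime r (c div g)"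
    using assms by (simp add: r_def g_def div_gcd_coprime)
  have "{h \<in> {..<n}. n dvd c * h} \<subseteq> (\<lambda>j. r * j) ` {..<g}"
  proof
    fix h assume h: "h \<in> {h \<in> {..<n}. n dvd c * h}"
    have "c * h = (c div g * h) * g" by (simp add: g_def mult_ac)
    with h n_eq \<open>g > 0\<close> have "r dvd c div g * h" by simp
    with \<open>coprime r (c div g)\<close> have "r dvd h" by (simp add: coprime_dvd_mult_right_iff)
    then obtain j where "h = r * j" by blast
    with h n_eq show "h \<in> (\<lambda>j. r * j) ` {..<g}" by auto
  qed
  then have "card {h \<in> {..<n}. n dvd c * h} \<le> card ((\<lambda>j. r * j) ` {..<g})"
    by (intro card_mono) auto
  also have "\<dots> \<le> g" using card_image_le [of "{..<g}" "\<lambda>j. r * j"] by simp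
  finally show ?thesis by (simp add: g_def)
qed

lemma norm_gauss_sum_sq_le:
  assumes "n > 0"
  shows "(cmod (gauss_sum n \<xi>))\<^sup>2 \<le> real n * gcd n (2 * \<xi>)"
proof -
  have "(cmod (gauss_sum n \<xi>))\<^sup>2 = cmod (complex_of_real ((cmod (gauss_sum n \<xi>))\<^sup>2))"
    by (simp only: norm_of_real abs_power2)
  also have "\<dots> \<le> (\<Sum>h<n. cmod (add_char n (- (int \<xi> * int h * int h))
      * (if n dvd 2 * \<xi> * h then of_nat n else 0)))"
    unfolding gauss_sum_norm_sq [OF assms] by (rule norm_sum)
  also have "\<dots> = (\<Sum>h<n. if n dvd 2 * \<xi> * h then real n else 0)"
    by (intro sum.cong refl) (simp add: norm_mult)
  also have "\<dots> = real n * card {h \<in> {..<n}. n dvd 2 * \<xi> * h}"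
    by (simp add: sum.If_cases Int_def)
  also have "\<dots> \<le> real n * gcd n (2 * \<xi>)"
    using card_dvd_mult_le_gcd [OF assms] by (simp add: mult_left_mono)
  finally show ?thesis .
qed

text \<open>The order \<open>n / gcd n (2\<xi>)\<close> of \<open>2\<xi>\<close> does not divide 12, so it is at least 5.\<close>
lemma gcd_double_le_fifth:
  fixes n \<xi> :: nat
  assumes "n > 0" "\<not> n dvd 24 * \<xi>"
  shows "5 * gcd n (2 * \<xi>) \<le> n"
proof -
  define g where "g = gcd n (2 * \<xi>)"
  define r where "r = n div g"
  from \<open>n > 0\<close> have n_eq: "n = r * g" and "g > 0" by (simp_all add: r_def g_def)
  have "r \<ge> 5"
  proof (rule ccontr)
    assume "\<not> r \<ge> 5"
    with \<open>n > 0\<close> n_eq have "r \<in> {1, 2, 3, 4}" by auto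
    then have "r dvd 12" by auto
    moreover have "g dvd 2 * \<xi>" by (simp add: g_def)
    ultimately have "r * g dvd 12 * (2 * \<xi>)" by (rule mult_dvd_mono)
    with assms n_eq show False by simp
  qed
  then show ?thesis using n_eq mult_le_mono1 [of 5 r g] by (simp add: g_def)
qed

lemma norm_gauss_sum_minor:
  assumes "\<xi> \<in> minor_freqs n 24"
  shows "cmod (gauss_sum n \<xi>) \<le> real n / sqrt 5"
proof -
  have "\<not> n dvd 24 * \<xi>" and "n > 0" using assms by (auto simp: minor_freqs_def)
  then have "real n * gcd n (2 * \<xi>) \<le> real n * (real n / 5)"
    using gcd_double_le_fifth [of n \<xi>] by (intro mult_left_mono) auto
  then have "(cmod (gauss_sum n \<xi>))\<^sup>2 \<le> real n ^ 2 / 5"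
    using norm_gauss_sum_sq_le [OF \<open>n > 0\<close>, of \<xi>] by (simp add: power2_eq_square)
  then have "cmod (gauss_sum n \<xi>) \<le> sqrt (real n ^ 2 / 5)"
    by (rule real_le_rsqrt)
  then show ?thesis
    by (simp add: real_sqrt_divide)
qed

lemma sqcount_mod [simp]: "sqcount n (t mod n) = sqcount n t"
  unfolding sqcount_def by simp

lemma add_mod_diff_cancel:
  fixes y z n :: nat
  assumes "y < n" "z < n"
  shows "((y + z) mod n + n - y) mod n = z"
  using assms by (cases "y + z < n") (simp_all add: le_mod_geq)

lemma sum_zconv_sqcount:
  assumes "n > 0"
  shows "(\<Sum>t<n. zconv n u v t * real (sqcount n t)) = (1 / real n) * sqcount_pair_sum n n u v"
proof -
  have shift: "(\<Sum>t<n. v ((t + n - y) mod n) * real (sqcount n t)) = (\<Sum>z<n. v z * real (sqcount n (y + z)))"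
    if "y < n" for y
  proof -
    have "(\<Sum>t<n. v ((t + n - y) mod n) * real (sqcount n t))
        = (\<Sum>z<n. v (((y + z) mod n + n - y) mod n) * real (sqcount n ((y + z) mod n)))"
      using assms by (rule sum_reindex_add_mod)
    also have "\<dots> = (\<Sum>z<n. v z * real (sqcount n (y + z)))"
      using that by (intro sum.cong refl) (simp add: add_mod_diff_cancel)
    finally show ?thesis .
  qed
  have "(\<Sum>t<n. zconv n u v t * real (sqcount n t))
      = (1 / real n) * (\<Sum>t<n. \<Sum>y<n. u y * (v ((t + n - y) mod n) * real (sqcount n t)))"
    unfolding zconv_def sum_distrib_left sum_distrib_right by (simp only: mult_ac)
  also have "\<dots> = (1 / real n) * (\<Sum>y<n. u y * (\<Sum>t<n. v ((t + n - y) mod n) * real (sqcount n t)))"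
    by (subst sum.swap) (simp only: sum_distrib_left)
  also have "\<dots> = (1 / real n) * (\<Sum>y<n. u y * (\<Sum>z<n. v z * real (sqcount n (y + z))))"
    by (intro arg_cong [where f = "\<lambda>x. 1 / real n * x"] sum.cong refl) (simp add: shift)
  also have "\<dots> = (1 / real n) * sqcount_pair_sum n n u v"
    unfolding sqcount_pair_sum_def by (simp add: sum_distrib_left mult_ac)
  finally show ?thesis .
qed

lemma sum_mod_24_class_avg:
  fixes g :: "nat \<Rightarrow> 'a::real_vector"
  assumes "q > 0"
  shows "(\<Sum>y<q. w y *\<^sub>R g (y mod 24)) = (\<Sum>k<24. (real q / 24 * class_avg q w k) *\<^sub>R g k)"
proof -
  have "(\<Sum>y<q. w y *\<^sub>R g (y mod 24))
      = (\<Sum>k<24. \<Sum>y\<in>{x \<in> {..<q}. x mod 24 = k}. w y *\<^sub>R g (y mod 24))"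
    by (rule sum.group [symmetric]) auto
  also have "\<dots> = (\<Sum>k<24. (\<Sum>y\<in>{x. x < q \<and> x mod 24 = k}. w y) *\<^sub>R g k)"
    unfolding scaleR_sum_left by (intro sum.cong refl) auto
  also have "\<dots> = (\<Sum>k<24. (real q / 24 * class_avg q w k) *\<^sub>R g k)"
    using assms by (simp add: class_avg_def)
  finally show ?thesis .
qed

lemma sqcount_pair_sum_24_class_avg:
  assumes "q > 0"
  shows "sqcount_pair_sum 24 q wA wB
    = (real q / 24)\<^sup>2 * sqcount_pair_sum 24 24 (class_avg q wA) (class_avg q wB)"
proof -
  let ?f = "\<lambda>k l. real (sqcount 24 (k + l))"
  let ?B = "\<lambda>k. \<Sum>l<24. (real q / 24 * class_avg q wB l) * ?f k l"
  have inner: "(\<Sum>z<q. wB z * ?f k (z mod 24)) = ?B k" for k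
    using sum_mod_24_class_avg [OF assms, of wB "?f k", unfolded real_scaleR_def] .
  have "sqcount 24 (y + z) = sqcount 24 (y mod 24 + z mod 24)" for y z
    by (metis mod_add_eq sqcount_mod)
  then have "sqcount_pair_sum 24 q wA wB = (\<Sum>y<q. wA y * (\<Sum>z<q. wB z * ?f (y mod 24) (z mod 24)))"
    unfolding sqcount_pair_sum_def by (simp add: sum_distrib_left mult_ac)
  also have "\<dots> = (\<Sum>y<q. wA y * ?B (y mod 24))"
    by (simp only: inner)
  also have "\<dots> = (\<Sum>k<24. (real q / 24 * class_avg q wA k) * ?B k)"
    using sum_mod_24_class_avg [OF assms, of wA ?B, unfolded real_scaleR_def] .
  also have "\<dots> = (real q / 24)\<^sup>2 * sqcount_pair_sum 24 24 (class_avg q wA) (class_avg q wB)"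
    unfolding sqcount_pair_sum_def by (simp add: sum_distrib_left power2_eq_square mult_ac)
  finally show ?thesis .
qed

lemma class_avg_zconv_sqcount:
  assumes "q > 0"
  shows "(\<Sum>t<24. zconv 24 (class_avg q wA) (class_avg q wB) t * real (sqcount 24 t))
    = 24 / (real q)\<^sup>2 * sqcount_pair_sum 24 q wA wB"
proof -
  have "(\<Sum>t<24. zconv 24 (class_avg q wA) (class_avg q wB) t * real (sqcount 24 t))
      = 1 / 24 * sqcount_pair_sum 24 24 (class_avg q wA) (class_avg q wB)"
    using sum_zconv_sqcount [of 24] by simp
  then show ?thesis
    unfolding sqcount_pair_sum_24_class_avg [OF assms] using assms by (simp add: power2_eq_square)
qed

subsection \<open>Frequencies that are multiples of \<open>q / 24\<close>\<close>

lemma dft_scale: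
  assumes "m > 0" shows "dft (m * d) Y w (m * j) = dft d Y w j"
  unfolding dft_def using add_char_scale [OF assms] by (simp add: mult.assoc)

lemma dft_24_class_avg:
  assumes "q > 0"
  shows "dft 24 {..<q} w j = dft 24 {..<24} (\<lambda>k. real q / 24 * class_avg q w k) j"
proof -
  have char_mod: "of_real (w y) * add_char 24 (int j * int y) = w y *\<^sub>R add_char 24 (int j * int (y mod 24))"
    for y
  proof -
    have "int 24 dvd int y - int (y mod 24)"
      using nat_mod_eq_iff_int_dvd [of "y mod 24" 24 y] by simp
    then have "int 24 dvd int j * int y - int j * int (y mod 24)"
      by (metis dvd_mult right_diff_distrib)
    then show ?thesis
      by (simp add: add_char_cong scaleR_conv_of_real)
  qed
  have "dft 24 {..<q} w j = (\<Sum>y<q. w y *\<^sub>R add_char 24 (int j * int (y mod 24)))"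
    unfolding dft_def char_mod ..
  also have "\<dots> = (\<Sum>k<24. (real q / 24 * class_avg q w k) *\<^sub>R add_char 24 (int j * int k))"
    using assms by (rule sum_mod_24_class_avg)
  also have "\<dots> = dft 24 {..<24} (\<lambda>k. real q / 24 * class_avg q w k) j"
    unfolding dft_def by (simp add: scaleR_conv_of_real)
  finally show ?thesis .
qed

lemma sum_periodic_nat:
  fixes g :: "nat \<Rightarrow> 'a::semiring_1"
  assumes "\<And>a s. g (a * d + s) = g s"
  shows "(\<Sum>s<m * d. g s) = of_nat m * (\<Sum>s<d. g s)"
proof -
  have "(\<Sum>s<m * d. g s) = (\<Sum>i<m. sum g {i * d..<i * d + d})"
    by (rule sum.nat_group [symmetric])
  also have "\<dots> = (\<Sum>i<m. \<Sum>s<d. g s)"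
  proof (rule sum.cong [OF refl])
    fix i
    have "sum g {i * d..<i * d + d} = (\<Sum>s<d. g (s + i * d))"
      using sum.shift_bounds_nat_ivl [of g 0 "i * d" d] by (simp add: add.commute lessThan_atLeast0)
    then show "sum g {i * d..<i * d + d} = (\<Sum>s<d. g s)"
      using assms by (simp add: add.commute)
  qed
  finally show ?thesis by simp
qed

lemma gauss_sum_scale:
  assumes "m > 0" "d > 0"
  shows "gauss_sum (m * d) (m * j) = of_nat m * gauss_sum d j"
proof -
  have "gauss_sum (m * d) (m * j) = (\<Sum>s<m * d. add_char d (- (int j * int (s * s))))"
    unfolding gauss_sum_def
  proof (rule sum.cong [OF refl])
    fix s
    have "- (int (m * j) * int (s * s)) = int m * (- (int j * int (s * s)))" by simp
    then show "add_char (m * d) (- (int (m * j) * int (s * s))) = add_char d (- (int j * int (s * s)))"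
      by (simp only: add_char_scale [OF assms(1)])
  qed
  also have "\<dots> = of_nat m * gauss_sum d j"
    unfolding gauss_sum_def
  proof (rule sum_periodic_nat)
    fix a s
    have "- (int j * int ((a * d + s) * (a * d + s))) - - (int j * int (s * s))
        = int d * (- (int j * int a * (int a * int d + 2 * int s)))"
      by (simp add: algebra_simps)
    then show "add_char d (- (int j * int ((a * d + s) * (a * d + s)))) = add_char d (- (int j * int (s * s)))"
      using assms(2) by (intro add_char_cong) simp_all
  qed
  finally show ?thesis .
qed

lemma sum_split_minor_freqs:
  fixes f :: "nat \<Rightarrow> 'a::comm_monoid_add"
  assumes "m > 0" "d > 0"
  shows "(\<Sum>\<xi><m * d. f \<xi>) = (\<Sum>j<d. f (m * j)) + (\<Sum>\<xi>\<in>minor_freqs (m * d) d. f \<xi>)"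
proof -
  have "{..<m * d} \<inter> {\<xi>. m dvd \<xi>} = (\<lambda>j. m * j) ` {..<d}"
    using assms by (auto simp: dvd_def)
  moreover have "{..<m * d} - {\<xi>. m dvd \<xi>} = minor_freqs (m * d) d"
    using assms by (auto simp: minor_freqs_def mult.commute [of m d])
  moreover have "inj_on (\<lambda>j. m * j) {..<d}"
    using assms by (simp add: inj_on_def)
  ultimately show ?thesis
    using sum.Int_Diff [of "{..<m * d}" f "{\<xi>. m dvd \<xi>}"] by (simp add: sum.reindex)
qed

subsection \<open>The minor frequencies\<close>

lemma minor_freqs_energy:
  assumes q: "q = m * 24" and "m > 0" and w: "\<And>x. x < q \<Longrightarrow> 0 \<le> w x \<and> w x \<le> 1"
  shows "(\<Sum>\<xi>\<in>minor_freqs q 24. (cmod (dft q {..<q} w \<xi>))\<^sup>2)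
    \<le> (real q)\<^sup>2 / 24 * (\<Sum>k<24. class_avg q w k - (class_avg q w k)\<^sup>2)"
proof -
  define a where "a = class_avg q w"
  have "q > 0" using assms by simp
  have "dft q {..<q} w (m * j) = dft 24 {..<24} (\<lambda>k. real q / 24 * a k) j" for j
    using dft_scale [OF \<open>m > 0\<close>, of 24 "{..<q}" w j] dft_24_class_avg [OF \<open>q > 0\<close>, of w j]
    by (simp add: a_def flip: q)
  then have major: "(\<Sum>j<24. (cmod (dft q {..<q} w (m * j)))\<^sup>2) = 24 * (\<Sum>k<24. (real q / 24 * a k)\<^sup>2)"
    using parseval [of 24 "\<lambda>k. real q / 24 * a k"] by simp
  have "(\<Sum>y<q. (w y)\<^sup>2) \<le> (\<Sum>y<q. w y)"
    using w by (intro sum_mono) (simp add: power2_eq_square mult_left_le)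
  also have "(\<Sum>y<q. w y) = (\<Sum>k<24. real q / 24 * a k)"
    using sum_mod_24_class_avg [OF \<open>q > 0\<close>, of w "\<lambda>_. 1 :: real", unfolded real_scaleR_def]
    by (simp add: a_def)
  finally have sq_le: "(\<Sum>y<q. (w y)\<^sup>2) \<le> (\<Sum>k<24. real q / 24 * a k)" .
  have "(\<Sum>\<xi><q. (cmod (dft q {..<q} w \<xi>))\<^sup>2) = (\<Sum>j<24. (cmod (dft q {..<q} w (m * j)))\<^sup>2)
      + (\<Sum>\<xi>\<in>minor_freqs q 24. (cmod (dft q {..<q} w \<xi>))\<^sup>2)"
    unfolding q by (rule sum_split_minor_freqs [OF \<open>m > 0\<close>]) simp
  then have "(\<Sum>\<xi>\<in>minor_freqs q 24. (cmod (dft q {..<q} w \<xi>))\<^sup>2)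
      = real q * (\<Sum>y<q. (w y)\<^sup>2) - 24 * (\<Sum>k<24. (real q / 24 * a k)\<^sup>2)"
    using parseval [OF \<open>q > 0\<close>, of w] major by linarith
  also have "\<dots> \<le> real q * (\<Sum>k<24. real q / 24 * a k) - 24 * (\<Sum>k<24. (real q / 24 * a k)\<^sup>2)"
    using mult_left_mono [OF sq_le, of "real q"] by simp
  also have "\<dots> = (real q)\<^sup>2 / 24 * (\<Sum>k<24. a k - (a k)\<^sup>2)"
    by (simp add: sum_distrib_left sum_subtractf power2_eq_square algebra_simps)
  finally show ?thesis unfolding a_def .
qed

lemma sqcount_pair_sum_diff_fourier:
  assumes q: "q = m * 24" and "m > 0"
  shows "complex_of_real (sqcount_pair_sum q q u v - sqcount_pair_sum 24 q u v)
    = (1 / of_nat q) * (\<Sum>\<xi>\<in>minor_freqs q 24. dft q {..<q} u \<xi> * dft q {..<q} v \<xi> * gauss_sum q \<xi>)"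
proof -
  let ?F = "\<lambda>\<xi>. dft q {..<q} u \<xi> * dft q {..<q} v \<xi> * gauss_sum q \<xi>"
  let ?minor = "\<Sum>\<xi>\<in>minor_freqs q 24. ?F \<xi>"
  have "?F (m * j) = of_nat m * (dft 24 {..<q} u j * dft 24 {..<q} v j * gauss_sum 24 j)" for j
    using dft_scale [OF \<open>m > 0\<close>, of 24 "{..<q}"] gauss_sum_scale [OF \<open>m > 0\<close>, of 24 j]
    by (simp add: mult_ac flip: q)
  then have "(1 / of_nat q) * (\<Sum>j<24. ?F (m * j))
      = (1 / 24) * (\<Sum>j<24. dft 24 {..<q} u j * dft 24 {..<q} v j * gauss_sum 24 j)"
    using \<open>m > 0\<close> by (simp add: q sum_distrib_left)
  also have "\<dots> = complex_of_real (sqcount_pair_sum 24 q u v)"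
    by (simp add: sqcount_pair_sum_fourier)
  finally have major: "(1 / of_nat q) * (\<Sum>j<24. ?F (m * j)) = complex_of_real (sqcount_pair_sum 24 q u v)" .
  have "complex_of_real (sqcount_pair_sum q q u v) = (1 / of_nat q) * (\<Sum>\<xi><q. ?F \<xi>)"
    using \<open>m > 0\<close> by (simp add: q sqcount_pair_sum_fourier)
  also have "\<dots> = (1 / of_nat q) * (\<Sum>j<24. ?F (m * j)) + (1 / of_nat q) * ?minor"
    using sum_split_minor_freqs [OF \<open>m > 0\<close>, of 24 ?F] by (simp add: q distrib_left)
  finally show ?thesis
    unfolding major by simp
qed

lemma sqcount_pair_sum_diff_bound:
  assumes q: "q = m * 24" and "m > 0"
    and wA: "\<And>x. x < q \<Longrightarrow> 0 \<le> wA x \<and> wA x \<le> 1"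
    and wB: "\<And>x. x < q \<Longrightarrow> 0 \<le> wB x \<and> wB x \<le> 1"
  shows "\<bar>sqcount_pair_sum q q wA wB - sqcount_pair_sum 24 q wA wB\<bar>
    \<le> (real q)\<^sup>2 / 24 * (1 / sqrt 5 * sqrt (\<Sum>k<24. class_avg q wA k - (class_avg q wA k)\<^sup>2)
        * sqrt (\<Sum>k<24. class_avg q wB k - (class_avg q wB k)\<^sup>2))"
    (is "_ \<le> ?c * (_ * sqrt ?SA * sqrt ?SB)")
proof -
  let ?R = "minor_freqs q 24"
  let ?A = "\<lambda>\<xi>. cmod (dft q {..<q} wA \<xi>)"
  let ?B = "\<lambda>\<xi>. cmod (dft q {..<q} wB \<xi>)"
  have "real q > 0" using assms by simp
  have c: "sqrt ?c * sqrt ?c = ?c" by simp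
  have LA: "L2_set ?A ?R \<le> sqrt (?c * ?SA)" and LB: "L2_set ?B ?R \<le> sqrt (?c * ?SB)"
    unfolding L2_set_def using minor_freqs_energy [OF q \<open>m > 0\<close>] wA wB by (simp_all add: real_sqrt_le_mono)
  have L2_le: "L2_set ?A ?R * L2_set ?B ?R \<le> sqrt (?c * ?SA) * sqrt (?c * ?SB)"
    using mult_mono [OF LA LB order.trans [OF L2_set_nonneg LA] L2_set_nonneg] .
  have "\<bar>sqcount_pair_sum q q wA wB - sqcount_pair_sum 24 q wA wB\<bar>
      = cmod (complex_of_real (sqcount_pair_sum q q wA wB - sqcount_pair_sum 24 q wA wB))"
    by (simp only: norm_of_real)
  also have "\<dots> = 1 / real q * cmod (\<Sum>\<xi>\<in>?R. dft q {..<q} wA \<xi> * dft q {..<q} wB \<xi> * gauss_sum q \<xi>)"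
    unfolding sqcount_pair_sum_diff_fourier [OF q \<open>m > 0\<close>] by (simp add: norm_mult norm_divide)
  also have "\<dots> \<le> 1 / real q * (\<Sum>\<xi>\<in>?R. ?A \<xi> * ?B \<xi> * cmod (gauss_sum q \<xi>))"
    by (intro mult_left_mono order.trans [OF norm_sum]) (simp_all add: norm_mult)
  also have "\<dots> \<le> 1 / real q * (\<Sum>\<xi>\<in>?R. ?A \<xi> * ?B \<xi> * (real q / sqrt 5))"
    by (intro mult_left_mono sum_mono) (simp_all add: norm_gauss_sum_minor)
  also have "\<dots> = 1 / sqrt 5 * (\<Sum>\<xi>\<in>?R. \<bar>?A \<xi>\<bar> * \<bar>?B \<xi>\<bar>)"
    using \<open>real q > 0\<close> by (simp add: sum_distrib_left sum_distrib_right)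
  also have "\<dots> \<le> 1 / sqrt 5 * (L2_set ?A ?R * L2_set ?B ?R)"
    by (intro mult_left_mono L2_set_mult_ineq) simp
  also have "\<dots> \<le> 1 / sqrt 5 * (sqrt (?c * ?SA) * sqrt (?c * ?SB))"
    by (intro mult_left_mono L2_le) simp
  also have "\<dots> = 1 / sqrt 5 * (sqrt ?c * sqrt ?c * (sqrt ?SA * sqrt ?SB))"
    by (simp only: real_sqrt_mult) (simp only: mult_ac)
  also have "\<dots> = ?c * (1 / sqrt 5 * sqrt ?SA * sqrt ?SB)"
    unfolding c by (simp only: mult_ac)
  finally show ?thesis .
qed

theorem mainTheorem7:
  fixes q :: nat and wA wB :: "nat \<Rightarrow> real"
  assumes "q > 0" and "24 dvd q"
    and "\<And>x. x < q \<Longrightarrow> 0 \<le> wA x \<and> wA x \<le> 1"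
    and "\<And>x. x < q \<Longrightarrow> 0 \<le> wB x \<and> wB x \<le> 1"
  shows "(24 / real q) * (\<Sum>t<q. zconv q wA wB t * real (sqcount q t))
     \<ge> (\<Sum>t<24. zconv 24 (class_avg q wA) (class_avg q wB) t * real (sqcount 24 t))
       - (1 / sqrt 5) * sqrt (\<Sum>k<24. class_avg q wA k - (class_avg q wA k)^2)
                     * sqrt (\<Sum>k<24. class_avg q wB k - (class_avg q wB k)^2)"
proof -
  obtain m where q: "q = m * 24" and "m > 0"
    using assms(1,2) by (auto simp: dvd_def mult.commute)
  let ?PA = "sqcount_pair_sum q q wA wB" and ?PB = "sqcount_pair_sum 24 q wA wB"
  let ?E = "(1 / sqrt 5) * sqrt (\<Sum>k<24. class_avg q wA k - (class_avg q wA k)^2)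
      * sqrt (\<Sum>k<24. class_avg q wB k - (class_avg q wB k)^2)"
  have "0 \<le> 24 / (real q)\<^sup>2" by simp
  with sqcount_pair_sum_diff_bound [OF q \<open>m > 0\<close> assms(3) assms(4)]
  have "24 / (real q)\<^sup>2 * \<bar>?PA - ?PB\<bar> \<le> 24 / (real q)\<^sup>2 * ((real q)\<^sup>2 / 24 * ?E)"
    by (rule mult_left_mono)
  also have "\<dots> = ?E"
    using assms(1) by simp
  finally have "24 / (real q)\<^sup>2 * \<bar>?PA - ?PB\<bar> \<le> ?E" .
  moreover have "24 / (real q)\<^sup>2 * (?PB - ?PA) \<le> 24 / (real q)\<^sup>2 * \<bar>?PA - ?PB\<bar>"
    using \<open>0 \<le> 24 / (real q)\<^sup>2\<close> by (intro mult_left_mono) auto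
  ultimately have "24 / (real q)\<^sup>2 * ?PB - ?E \<le> 24 / (real q)\<^sup>2 * ?PA"
    unfolding right_diff_distrib by linarith
  then show ?thesis
    unfolding class_avg_zconv_sqcount [OF assms(1)]
    unfolding sum_zconv_sqcount [OF assms(1)]
    by (simp add: power2_eq_square)
qed

end
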